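(* Let $\Omega\subset\mathbb R^3$ be a bounded domain and $D\subset\partial\Omega$ closed. Suppose $U\subset\mathbb R^3$ is open with $U\subset\Omega\cup D$ and that $\Omega\cap U$ splits up into the connected components $\Omega_1,\dots,\Omega_m$. Let $q\in[1,\infty[$. Then for any $f\in W^{1,q}_D(\Omega)$ and $\eta\in C^\infty_0(U)$, the function $\eta f|_{\Omega_j}$ belongs to $W^{1,q}_0(\Omega_j)$ for every $j$.
   Context: For an open set $\Lambda\subset\mathbb R^d$ and a closed set $E\subset\partial\Lambda$, $C^\infty_E(\Lambda)=\{v|_\Lambda: v\in C^\infty_0(\mathbb R^d),\ \operatorname{supp}v\cap E=\emptyset\}$, $W^{1,q}_E(\Lambda)$ is the closure of $C^\infty_E(\Lambda)$ in $W^{1,q}(\Lambda)$, and $W^{1,q}_0(\Lambda)=W^{1,q}_{\partial\Lambda}(\Lambda)$. *)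

theory Defs
  imports "HOL-Analysis.Analysis"
begin

definition csupp :: "('a::topological_space \<Rightarrow> real) \<Rightarrow> 'a set" where
  "csupp v = closure {x. v x \<noteq> 0}"

definition pderiv :: "('a::euclidean_space \<Rightarrow> real) \<Rightarrow> 'a \<Rightarrow> 'a \<Rightarrow> real" where
  "pderiv g i = (\<lambda>x. frechet_derivative g (at x) i)"

text \<open>C-infinity on the whole space: contained in a family of everywhere (Frechet)
  differentiable functions that is closed under taking partial derivatives.\<close>
definition smooth :: "('a::euclidean_space \<Rightarrow> real) \<Rightarrow> bool" where
  "smooth f \<longleftrightarrow> (\<exists>S. f \<in> S \<and>
      (\<forall>g\<in>S. g differentiable_on UNIV \<and> (\<forall>i\<in>Basis. pderiv g i \<in> S)))"

definition Cinf_c :: "'a::euclidean_space set \<Rightarrow> ('a \<Rightarrow> real) set" where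
  "Cinf_c \<Lambda> = {\<phi>. smooth \<phi> \<and> compact (csupp \<phi>) \<and> csupp \<phi> \<subseteq> \<Lambda>}"

definition Lq :: "real \<Rightarrow> 'a::euclidean_space set \<Rightarrow> ('a \<Rightarrow> real) \<Rightarrow> bool" where
  "Lq q \<Lambda> f \<longleftrightarrow> set_borel_measurable lebesgue \<Lambda> f \<and>
      (\<integral>\<^sup>+ x\<in>\<Lambda>. ennreal (\<bar>f x\<bar> powr q) \<partial>lebesgue) < \<infinity>"

definition weak_pderiv :: "'a::euclidean_space set \<Rightarrow> ('a \<Rightarrow> real) \<Rightarrow> 'a \<Rightarrow> ('a \<Rightarrow> real) \<Rightarrow> bool" where
  "weak_pderiv \<Lambda> f i g \<longleftrightarrow> (\<forall>\<phi>\<in>Cinf_c \<Lambda>.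
      (LINT x:\<Lambda>|lebesgue. f x * pderiv \<phi> i x) = - (LINT x:\<Lambda>|lebesgue. g x * \<phi> x))"

definition W1q_grad :: "real \<Rightarrow> 'a::euclidean_space set \<Rightarrow> ('a \<Rightarrow> real) \<Rightarrow> ('a \<Rightarrow> 'a \<Rightarrow> real) \<Rightarrow> bool" where
  "W1q_grad q \<Lambda> f g \<longleftrightarrow> Lq q \<Lambda> f \<and> (\<forall>i\<in>Basis. weak_pderiv \<Lambda> f i (g i) \<and> Lq q \<Lambda> (g i))"

text \<open>W^{1,q}_E(Lambda): closure in the W^{1,q}(Lambda)-norm of restrictions of C-infinity
  compactly supported functions on the whole space whose support avoids E.
  (Distance measured by the q-th power of the W^{1,q} norm.)\<close>
definition W1qE :: "real \<Rightarrow> 'a::euclidean_space set \<Rightarrow> 'a set \<Rightarrow> ('a \<Rightarrow> real) \<Rightarrow> bool" where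
  "W1qE q \<Lambda> E f \<longleftrightarrow> (\<exists>g. W1q_grad q \<Lambda> f g \<and>
      (\<forall>\<epsilon>>0. \<exists>v. smooth v \<and> compact (csupp v) \<and> csupp v \<inter> E = {} \<and>
         (\<integral>\<^sup>+ x\<in>\<Lambda>. ennreal (\<bar>f x - v x\<bar> powr q
              + (\<Sum>i\<in>Basis. \<bar>g i x - pderiv v i x\<bar> powr q)) \<partial>lebesgue) < ennreal \<epsilon>))"

definition W1q0 :: "real \<Rightarrow> 'a::euclidean_space set \<Rightarrow> ('a \<Rightarrow> real) \<Rightarrow> bool" where
  "W1q0 q \<Lambda> f \<longleftrightarrow> W1qE q \<Lambda> (frontier \<Lambda>) f"

end

theory Submission
  imports Defs
begin

(* Let v be smooth with support avoiding D and close to f in W^{1,q}(\<Omega>). Then v \<eta> is smooth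
  with support in U - D, a subset of \<Omega> \<inter> U, so it vanishes near the frontier of every
  component \<Omega>j of the open set \<Omega> \<inter> U. Testing the weak derivatives of f against \<eta> \<phi> gives the
  Leibniz rule: on \<Omega>j, \<eta> f has weak gradient \<eta> \<nabla>f + f \<nabla>\<eta>. As \<eta> and \<nabla>\<eta> are bounded, the
  W^{1,q}(\<Omega>j)-distance from \<eta> f to v \<eta> is at most a constant times the W^{1,q}(\<Omega>)-distance
  from f to v. *)

lemma pderiv_mult:
  assumes "a differentiable (at x)" "b differentiable (at x)"
  shows "pderiv (\<lambda>x. a x * b x) i x = pderiv a i x * b x + a x * pderiv b i x"
proof -
  have "((\<lambda>x. a x * b x) has_derivative
     (\<lambda>h. a x * frechet_derivative b (at x) h + frechet_derivative a (at x) h * b x)) (at x)"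
    by (rule has_derivative_mult) (use assms frechet_derivative_works in blast)+
  from frechet_derivative_at[OF this] show ?thesis
    unfolding pderiv_def by (metis add.commute mult.commute)
qed

lemma pderiv_add:
  assumes "a differentiable (at x)" "b differentiable (at x)"
  shows "pderiv (\<lambda>x. a x + b x) i x = pderiv a i x + pderiv b i x"
proof -
  have "((\<lambda>x. a x + b x) has_derivative
     (\<lambda>h. frechet_derivative a (at x) h + frechet_derivative b (at x) h)) (at x)"
    by (rule has_derivative_add) (use assms frechet_derivative_works in blast)+
  from frechet_derivative_at[OF this] show ?thesis
    unfolding pderiv_def by metis
qed

lemma smooth_differentiable: "smooth a \<Longrightarrow> a differentiable (at x)"
  unfolding smooth_def differentiable_on_def by blast

lemma smooth_pderiv: "smooth a \<Longrightarrow> i \<in> Basis \<Longrightarrow> smooth (pderiv a i)"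
  unfolding smooth_def by blast

lemma continuous_on_smooth: "smooth a \<Longrightarrow> continuous_on UNIV a"
  by (simp add: continuous_at_imp_continuous_on differentiable_imp_continuous_within
      smooth_differentiable)

text \<open>The partial derivatives of a product of smooth functions are sums of such products,
  so this family witnesses the smoothness of products.\<close>
inductive_set sums_of_smooth_products :: "('a::euclidean_space \<Rightarrow> real) set" where
  product: "smooth a \<Longrightarrow> smooth b \<Longrightarrow> (\<lambda>x. a x * b x) \<in> sums_of_smooth_products"
| sum: "h1 \<in> sums_of_smooth_products \<Longrightarrow> h2 \<in> sums_of_smooth_products \<Longrightarrow>
     (\<lambda>x. h1 x + h2 x) \<in> sums_of_smooth_products"

lemma sums_of_smooth_products_closed:
  assumes "h \<in> sums_of_smooth_products"
  shows "h differentiable_on UNIV \<and> (\<forall>i\<in>Basis. pderiv h i \<in> sums_of_smooth_products)"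
  using assms
proof induction
  case (product a b)
  have da: "a differentiable (at x)" and db: "b differentiable (at x)" for x
    using product smooth_differentiable by blast+
  have "pderiv (\<lambda>x. a x * b x) i = (\<lambda>x. pderiv a i x * b x + a x * pderiv b i x)" for i
    using pderiv_mult[OF da db] by blast
  moreover have "(\<lambda>x. pderiv a i x * b x + a x * pderiv b i x) \<in> sums_of_smooth_products"
    if "i \<in> Basis" for i
    using product that
    by (intro sums_of_smooth_products.sum sums_of_smooth_products.product smooth_pderiv)
  moreover have "(\<lambda>x. a x * b x) differentiable_on UNIV"
    using da db by (simp add: differentiable_on_def differentiable_mult)
  ultimately show ?case by simp
next
  case (sum h1 h2)
  have d1: "h1 differentiable (at x)" and d2: "h2 differentiable (at x)" for x
    using sum by (auto simp: differentiable_on_def)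
  have "pderiv (\<lambda>x. h1 x + h2 x) i = (\<lambda>x. pderiv h1 i x + pderiv h2 i x)" for i
    using pderiv_add[OF d1 d2] by blast
  moreover have "(\<lambda>x. h1 x + h2 x) differentiable_on UNIV"
    using d1 d2 by (simp add: differentiable_on_def differentiable_add)
  ultimately show ?case
    using sum by (simp add: sums_of_smooth_products.sum)
qed

lemma smooth_mult:
  assumes "smooth a" "smooth b"
  shows "smooth (\<lambda>x. a x * b x)"
  unfolding smooth_def
  using sums_of_smooth_products.product[OF assms] sums_of_smooth_products_closed by blast

lemma closed_csupp: "closed (csupp a)"
  unfolding csupp_def by simp

lemma notin_csupp_eq_0: "x \<notin> csupp a \<Longrightarrow> a x = 0"
  using closure_subset[of "{x. a x \<noteq> 0}"] unfolding csupp_def by auto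

lemma csupp_mult_subset: "csupp (\<lambda>x. a x * b x) \<subseteq> csupp a \<inter> csupp b"
  unfolding csupp_def by (intro Int_greatest closure_mono) auto

lemma pderiv_notin_csupp:
  fixes a :: "'a::euclidean_space \<Rightarrow> real"
  assumes "x \<notin> csupp a"
  shows "pderiv a i x = 0"
proof -
  have "open (- csupp a)"
    using closed_csupp by blast
  moreover have "\<And>y. y \<in> - csupp a \<Longrightarrow> 0 = a y"
    using notin_csupp_eq_0 by force
  ultimately have "(a has_derivative (\<lambda>h. 0)) (at x)"
    using assms has_derivative_transform_within_open[of "\<lambda>y. 0" "\<lambda>h. 0" x UNIV "- csupp a" a]
    by simp
  from frechet_derivative_at[OF this] show ?thesis
    unfolding pderiv_def by metis
qed

lemma csupp_pderiv_subset: "csupp (pderiv a i) \<subseteq> csupp a"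
  unfolding csupp_def[of "pderiv a i"]
proof (rule closure_minimal)
  show "{x. pderiv a i x \<noteq> 0} \<subseteq> csupp a"
    by (metis (mono_tags) mem_Collect_eq pderiv_notin_csupp subsetI)
qed (rule closed_csupp)

lemma Cinf_c_mono: "\<Lambda> \<subseteq> \<Lambda>' \<Longrightarrow> Cinf_c \<Lambda> \<subseteq> Cinf_c \<Lambda>'"
  unfolding Cinf_c_def by blast

lemma Cinf_c_mult:
  assumes "smooth a" "\<phi> \<in> Cinf_c \<Lambda>"
  shows "(\<lambda>x. a x * \<phi> x) \<in> Cinf_c \<Lambda>"
proof -
  have "csupp (\<lambda>x. a x * \<phi> x) \<subseteq> csupp \<phi>"
    using csupp_mult_subset by blast
  moreover have "compact (csupp \<phi> \<inter> csupp (\<lambda>x. a x * \<phi> x))"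
    using assms(2) unfolding Cinf_c_def by (simp add: compact_Int_closed closed_csupp)
  ultimately show ?thesis
    using assms unfolding Cinf_c_def by (auto intro: smooth_mult simp: Int_absorb1)
qed

lemma Cinf_c_pderiv:
  assumes "\<phi> \<in> Cinf_c \<Lambda>" "i \<in> Basis"
  shows "pderiv \<phi> i \<in> Cinf_c \<Lambda>"
proof -
  have "compact (csupp \<phi> \<inter> csupp (pderiv \<phi> i))"
    using assms(1) unfolding Cinf_c_def by (simp add: compact_Int_closed closed_csupp)
  moreover have "csupp \<phi> \<inter> csupp (pderiv \<phi> i) = csupp (pderiv \<phi> i)"
    using csupp_pderiv_subset by blast
  ultimately show ?thesis
    using assms csupp_pderiv_subset[of \<phi> i] smooth_pderiv unfolding Cinf_c_def by auto
qed

lemma Cinf_c_bounded: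
  assumes "\<phi> \<in> Cinf_c \<Lambda>"
  shows "\<exists>M. \<forall>x. \<bar>\<phi> x\<bar> \<le> M"
proof -
  have "compact (\<phi> ` csupp \<phi>)"
    using assms unfolding Cinf_c_def
    by (simp add: compact_continuous_image continuous_on_subset[OF continuous_on_smooth])
  then obtain M where "\<forall>y\<in>\<phi> ` csupp \<phi>. norm y \<le> M"
    using compact_imp_bounded bounded_iff by blast
  then have "\<bar>\<phi> x\<bar> \<le> \<bar>M\<bar>" for x
    using notin_csupp_eq_0[of x \<phi>] by (cases "x \<in> csupp \<phi>") auto
  then show ?thesis by blast
qed

lemma abs_add_powr_le:
  fixes a b q :: real
  assumes "0 \<le> q"
  shows "\<bar>a + b\<bar> powr q \<le> 2 powr q * (\<bar>a\<bar> powr q + \<bar>b\<bar> powr q)"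
proof -
  have "\<bar>a + b\<bar> powr q \<le> (2 * max \<bar>a\<bar> \<bar>b\<bar>) powr q"
    using assms by (intro powr_mono2) auto
  also have "\<dots> = 2 powr q * max \<bar>a\<bar> \<bar>b\<bar> powr q"
    by (simp add: powr_mult)
  also have "max \<bar>a\<bar> \<bar>b\<bar> powr q \<le> \<bar>a\<bar> powr q + \<bar>b\<bar> powr q"
    by (cases "\<bar>a\<bar> \<le> \<bar>b\<bar>") (auto simp: max_def)
  then have "2 powr q * max \<bar>a\<bar> \<bar>b\<bar> powr q \<le> 2 powr q * (\<bar>a\<bar> powr q + \<bar>b\<bar> powr q)"
    by (intro mult_left_mono) auto
  finally show ?thesis .
qed

lemma abs_mult_powr_le:
  fixes n e A q :: real
  assumes "0 \<le> q" "\<bar>n\<bar> \<le> A"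
  shows "\<bar>n * e\<bar> powr q \<le> A powr q * \<bar>e\<bar> powr q"
proof -
  have "\<bar>n * e\<bar> powr q = \<bar>n\<bar> powr q * \<bar>e\<bar> powr q"
    by (simp add: abs_mult powr_mult)
  also have "\<dots> \<le> A powr q * \<bar>e\<bar> powr q"
    using assms by (intro mult_right_mono powr_mono2) auto
  finally show ?thesis .
qed

lemma borel_measurable_lebesgue_on_smooth:
  "smooth a \<Longrightarrow> S \<in> sets lebesgue \<Longrightarrow> a \<in> borel_measurable (lebesgue_on S)"
  by (intro continuous_imp_measurable_on_sets_lebesgue continuous_on_subset[OF continuous_on_smooth])
    auto

lemma set_borel_measurable_iff_lebesgue_on:
  fixes f :: "'a::euclidean_space \<Rightarrow> real"
  shows "S \<in> sets lebesgue \<Longrightarrow>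
     set_borel_measurable lebesgue S f \<longleftrightarrow> f \<in> borel_measurable (lebesgue_on S)"
  using borel_measurable_restrict_space_iff[of S lebesgue f] by (simp add: set_borel_measurable_def)

lemma Lq_iff_lebesgue_on:
  "S \<in> sets lebesgue \<Longrightarrow> Lq q S f \<longleftrightarrow>
     f \<in> borel_measurable (lebesgue_on S) \<and>
     (\<integral>\<^sup>+ x. ennreal (\<bar>f x\<bar> powr q) \<partial>lebesgue_on S) < \<infinity>"
  by (simp add: Lq_def set_borel_measurable_iff_lebesgue_on nn_integral_restrict_space)

lemma Lq_subset:
  assumes "Lq q S f" "T \<subseteq> S" "T \<in> sets lebesgue"
  shows "Lq q T f"
proof -
  have "(\<integral>\<^sup>+ x\<in>T. ennreal (\<bar>f x\<bar> powr q) \<partial>lebesgue) \<le> (\<integral>\<^sup>+ x\<in>S. ennreal (\<bar>f x\<bar> powr q) \<partial>lebesgue)"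
    using assms(2) by (intro nn_integral_mono) (auto split: split_indicator)
  with assms show ?thesis
    unfolding Lq_def by (auto intro: set_borel_measurable_subset)
qed

lemma Lq_add:
  fixes a b :: "'a::euclidean_space \<Rightarrow> real"
  assumes "Lq q S a" "Lq q S b" "0 \<le> q" "S \<in> sets lebesgue"
  shows "Lq q S (\<lambda>x. a x + b x)"
proof -
  have a: "a \<in> borel_measurable (lebesgue_on S)" "(\<integral>\<^sup>+ x. ennreal (\<bar>a x\<bar> powr q) \<partial>lebesgue_on S) < \<infinity>"
    and b: "b \<in> borel_measurable (lebesgue_on S)" "(\<integral>\<^sup>+ x. ennreal (\<bar>b x\<bar> powr q) \<partial>lebesgue_on S) < \<infinity>"
    using assms by (auto simp: Lq_iff_lebesgue_on)
  have "(\<integral>\<^sup>+ x. ennreal (\<bar>a x + b x\<bar> powr q) \<partial>lebesgue_on S)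
      \<le> (\<integral>\<^sup>+ x. ennreal (2 powr q) * (ennreal (\<bar>a x\<bar> powr q) + ennreal (\<bar>b x\<bar> powr q)) \<partial>lebesgue_on S)"
    using abs_add_powr_le[OF assms(3)]
    by (intro nn_integral_mono) (simp add: ennreal_mult[symmetric] ennreal_plus[symmetric] del: ennreal_plus)
  also have "\<dots> = ennreal (2 powr q) * ((\<integral>\<^sup>+ x. ennreal (\<bar>a x\<bar> powr q) \<partial>lebesgue_on S)
      + (\<integral>\<^sup>+ x. ennreal (\<bar>b x\<bar> powr q) \<partial>lebesgue_on S))"
    using a(1) b(1) by (simp add: nn_integral_cmult nn_integral_add)
  also have "\<dots> < \<infinity>"
    using a(2) b(2) by (simp add: ennreal_mult_less_top)
  finally show ?thesis
    using a(1) b(1) assms(4) by (simp add: Lq_iff_lebesgue_on)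
qed

lemma Lq_mult_Cinf_c:
  fixes f :: "'a::euclidean_space \<Rightarrow> real"
  assumes "Lq q S f" "0 \<le> q" "S \<in> sets lebesgue" "\<phi> \<in> Cinf_c \<Lambda>"
  shows "Lq q S (\<lambda>x. \<phi> x * f x)"
proof -
  obtain M where M: "\<And>x. \<bar>\<phi> x\<bar> \<le> M"
    using Cinf_c_bounded[OF assms(4)] by blast
  have f: "f \<in> borel_measurable (lebesgue_on S)" "(\<integral>\<^sup>+ x. ennreal (\<bar>f x\<bar> powr q) \<partial>lebesgue_on S) < \<infinity>"
    using assms by (auto simp: Lq_iff_lebesgue_on)
  have \<phi>: "\<phi> \<in> borel_measurable (lebesgue_on S)"
    using assms(3,4) borel_measurable_lebesgue_on_smooth unfolding Cinf_c_def by blast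
  have "(\<integral>\<^sup>+ x. ennreal (\<bar>\<phi> x * f x\<bar> powr q) \<partial>lebesgue_on S)
      \<le> (\<integral>\<^sup>+ x. ennreal (M powr q) * ennreal (\<bar>f x\<bar> powr q) \<partial>lebesgue_on S)"
    using abs_mult_powr_le[OF assms(2) M]
    by (intro nn_integral_mono) (simp add: ennreal_mult[symmetric])
  also have "\<dots> = ennreal (M powr q) * (\<integral>\<^sup>+ x. ennreal (\<bar>f x\<bar> powr q) \<partial>lebesgue_on S)"
    using f(1) by (simp add: nn_integral_cmult)
  also have "\<dots> < \<infinity>"
    using f(2) by (simp add: ennreal_mult_less_top)
  finally show ?thesis
    using f(1) \<phi> assms(3) by (simp add: Lq_iff_lebesgue_on)
qed

lemma Lq_set_integrable:
  fixes f :: "'a::euclidean_space \<Rightarrow> real"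
  assumes "Lq q S f" "1 \<le> q" "S \<in> sets lebesgue" "emeasure lebesgue S < \<infinity>"
  shows "set_integrable lebesgue S f"
proof -
  have f: "f \<in> borel_measurable (lebesgue_on S)" "(\<integral>\<^sup>+ x. ennreal (\<bar>f x\<bar> powr q) \<partial>lebesgue_on S) < \<infinity>"
    using assms by (auto simp: Lq_iff_lebesgue_on)
  have "ennreal \<bar>y\<bar> \<le> 1 + ennreal (\<bar>y\<bar> powr q)" for y :: real
  proof -
    have "\<bar>y\<bar> \<le> 1 + \<bar>y\<bar> powr q"
    proof (cases "\<bar>y\<bar> \<le> 1")
      case False
      then have "\<bar>y\<bar> powr 1 \<le> \<bar>y\<bar> powr q"
        using assms(2) by (intro powr_mono) auto
      then show ?thesis
        using False by simp
    qed (simp add: add_increasing2)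
    then show ?thesis
      by (simp add: ennreal_leI flip: ennreal_1 ennreal_plus)
  qed
  then have "(\<integral>\<^sup>+ x. ennreal (norm (f x)) \<partial>lebesgue_on S)
      \<le> (\<integral>\<^sup>+ x. 1 + ennreal (\<bar>f x\<bar> powr q) \<partial>lebesgue_on S)"
    by (intro nn_integral_mono) simp
  also have "\<dots> = emeasure lebesgue S + (\<integral>\<^sup>+ x. ennreal (\<bar>f x\<bar> powr q) \<partial>lebesgue_on S)"
    using f(1) assms(3) by (simp add: nn_integral_add emeasure_restrict_space)
  also have "\<dots> < \<infinity>"
    using f(2) assms(4) by simp
  finally have "integrable (lebesgue_on S) f"
    using f(1) by (intro integrableI_bounded)
  then show ?thesis
    using assms(3) by (simp add: set_integrable_def integrable_restrict_space)
qed

lemma set_integrable_mult_Cinf_c: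
  assumes "set_integrable lebesgue S f" "S \<in> sets lebesgue" "\<phi> \<in> Cinf_c \<Lambda>"
  shows "set_integrable lebesgue S (\<lambda>x. \<phi> x * f x)"
proof (rule absolutely_integrable_bounded_measurable_product[OF bilinear_times])
  show "\<phi> \<in> borel_measurable (lebesgue_on S)"
    using assms(2,3) borel_measurable_lebesgue_on_smooth unfolding Cinf_c_def by blast
  obtain M where "\<And>x. \<bar>\<phi> x\<bar> \<le> M"
    using Cinf_c_bounded[OF assms(3)] by blast
  then show "bounded (\<phi> ` S)"
    unfolding bounded_iff by auto
qed (use assms in auto)

lemma set_integral_eq_subset:
  fixes h :: "'a \<Rightarrow> real"
  assumes "T \<subseteq> S" "\<And>x. x \<notin> T \<Longrightarrow> h x = 0"
  shows "(LINT x:S|M. h x) = (LINT x:T|M. h x)"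
  unfolding set_lebesgue_integral_def
  by (rule arg_cong[where f="integral\<^sup>L M"])
     (use assms in \<open>auto simp: fun_eq_iff split: split_indicator\<close>)

lemma open_sets_lebesgue: "open S \<Longrightarrow> S \<in> sets lebesgue"
  by (simp add: borel_open sets_completionI_sets)

lemma weak_pderiv_mult_smooth:
  fixes \<Omega> \<Lambda> :: "'a::euclidean_space set"
  assumes weak: "weak_pderiv \<Omega> f i g" and i: "i \<in> Basis"
    and f: "set_integrable lebesgue \<Omega> f" and g: "set_integrable lebesgue \<Omega> g"
    and \<Omega>: "\<Omega> \<in> sets lebesgue" and "\<Lambda> \<subseteq> \<Omega>" and \<eta>: "smooth \<eta>"
  shows "weak_pderiv \<Lambda> (\<lambda>x. \<eta> x * f x) i (\<lambda>x. \<eta> x * g x + pderiv \<eta> i x * f x)"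
  unfolding weak_pderiv_def
proof
  fix \<phi> assume \<phi>: "\<phi> \<in> Cinf_c \<Lambda>"
  define \<psi> where "\<psi> = (\<lambda>x. \<eta> x * \<phi> x)"
  define a1 where "a1 = (\<lambda>x. pderiv \<eta> i x * \<phi> x)"
  define a2 where "a2 = (\<lambda>x. \<eta> x * pderiv \<phi> i x)"
  have \<psi>_Cinf_c: "\<psi> \<in> Cinf_c \<Omega>"
    using Cinf_c_mult[OF \<eta> \<phi>] Cinf_c_mono[OF \<open>\<Lambda> \<subseteq> \<Omega>\<close>] unfolding \<psi>_def by blast
  have a1_Cinf_c: "a1 \<in> Cinf_c \<Lambda>"
    unfolding a1_def using \<eta> \<phi> i by (intro Cinf_c_mult smooth_pderiv)
  have a2_Cinf_c: "a2 \<in> Cinf_c \<Lambda>"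
    unfolding a2_def using \<eta> \<phi> i by (intro Cinf_c_mult Cinf_c_pderiv)
  have \<phi>_smooth: "smooth \<phi>" and outside: "\<And>x. x \<notin> \<Lambda> \<Longrightarrow> \<phi> x = 0 \<and> pderiv \<phi> i x = 0"
    using \<phi> notin_csupp_eq_0 pderiv_notin_csupp unfolding Cinf_c_def by blast+
  have d\<psi>: "pderiv \<psi> i x = a1 x + a2 x" for x
    unfolding \<psi>_def a1_def a2_def
    by (rule pderiv_mult[OF smooth_differentiable[OF \<eta>] smooth_differentiable[OF \<phi>_smooth]])
  have I1: "set_integrable lebesgue \<Omega> (\<lambda>x. a1 x * f x)"
    and I2: "set_integrable lebesgue \<Omega> (\<lambda>x. a2 x * f x)"
    and I3: "set_integrable lebesgue \<Omega> (\<lambda>x. \<psi> x * g x)"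
    using set_integrable_mult_Cinf_c \<Omega> f g a1_Cinf_c a2_Cinf_c \<psi>_Cinf_c by blast+
  have "(LINT x:\<Lambda>|lebesgue. \<eta> x * f x * pderiv \<phi> i x) = (LINT x:\<Omega>|lebesgue. a2 x * f x)"
    using \<open>\<Lambda> \<subseteq> \<Omega>\<close> outside
    by (subst set_integral_eq_subset[of \<Lambda> \<Omega>]) (auto simp: a2_def mult_ac)
  also have "\<dots> = (LINT x:\<Omega>|lebesgue. f x * pderiv \<psi> i x) - (LINT x:\<Omega>|lebesgue. a1 x * f x)"
    using set_integral_add(2)[OF I1 I2] by (simp add: d\<psi> algebra_simps)
  also have "\<dots> = - (LINT x:\<Omega>|lebesgue. \<psi> x * g x) - (LINT x:\<Omega>|lebesgue. a1 x * f x)"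
    using weak \<psi>_Cinf_c unfolding weak_pderiv_def by (simp add: mult.commute)
  also have "\<dots> = - (LINT x:\<Omega>|lebesgue. (\<eta> x * g x + pderiv \<eta> i x * f x) * \<phi> x)"
    using set_integral_add(2)[OF I3 I1] by (simp add: \<psi>_def a1_def algebra_simps)
  also have "\<dots> = - (LINT x:\<Lambda>|lebesgue. (\<eta> x * g x + pderiv \<eta> i x * f x) * \<phi> x)"
    using \<open>\<Lambda> \<subseteq> \<Omega>\<close> outside by (subst set_integral_eq_subset[of \<Lambda> \<Omega>]) auto
  finally show "(LINT x:\<Lambda>|lebesgue. \<eta> x * f x * pderiv \<phi> i x)
      = - (LINT x:\<Lambda>|lebesgue. (\<eta> x * g x + pderiv \<eta> i x * f x) * \<phi> x)" .
qed

lemma W1q_grad_mult_Cinf_c: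
  fixes \<Omega> \<Lambda> :: "'a::euclidean_space set"
  assumes grad: "W1q_grad q \<Omega> f g" and q: "1 \<le> q"
    and \<Omega>: "\<Omega> \<in> sets lebesgue" "emeasure lebesgue \<Omega> < \<infinity>"
    and \<Lambda>: "\<Lambda> \<subseteq> \<Omega>" "\<Lambda> \<in> sets lebesgue" and \<eta>: "\<eta> \<in> Cinf_c U"
  shows "W1q_grad q \<Lambda> (\<lambda>x. \<eta> x * f x) (\<lambda>i x. \<eta> x * g i x + pderiv \<eta> i x * f x)"
  unfolding W1q_grad_def
proof (intro conjI ballI)
  have Lf: "Lq q \<Omega> f" and weak: "\<And>i. i \<in> Basis \<Longrightarrow> weak_pderiv \<Omega> f i (g i)"
    and Lg: "\<And>i. i \<in> Basis \<Longrightarrow> Lq q \<Omega> (g i)"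
    using grad unfolding W1q_grad_def by auto
  have q0: "0 \<le> q"
    using q by simp
  show "Lq q \<Lambda> (\<lambda>x. \<eta> x * f x)"
    using Lq_mult_Cinf_c[OF Lf q0 \<Omega>(1) \<eta>] Lq_subset \<Lambda> by blast
  fix i :: 'a assume i: "i \<in> Basis"
  have "Lq q \<Omega> (\<lambda>x. \<eta> x * g i x + pderiv \<eta> i x * f x)"
    using Lq_mult_Cinf_c[OF Lg[OF i] q0 \<Omega>(1) \<eta>]
      Lq_mult_Cinf_c[OF Lf q0 \<Omega>(1) Cinf_c_pderiv[OF \<eta> i]] q0 \<Omega>(1)
    by (rule Lq_add)
  then show "Lq q \<Lambda> (\<lambda>x. \<eta> x * g i x + pderiv \<eta> i x * f x)"
    using Lq_subset \<Lambda> by blast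
  show "weak_pderiv \<Lambda> (\<lambda>x. \<eta> x * f x) i (\<lambda>x. \<eta> x * g i x + pderiv \<eta> i x * f x)"
    using \<eta> \<Lambda>(1) \<Omega>(1) Lq_set_integrable[OF Lf q \<Omega>] Lq_set_integrable[OF Lg[OF i] q \<Omega>]
    unfolding Cinf_c_def by (intro weak_pderiv_mult_smooth[OF weak[OF i] i]) auto
qed

definition W1q_dist_powr ::
    "real \<Rightarrow> 'a::euclidean_space set \<Rightarrow> ('a \<Rightarrow> real) \<Rightarrow> ('a \<Rightarrow> 'a \<Rightarrow> real) \<Rightarrow> ('a \<Rightarrow> real) \<Rightarrow> ennreal"
  where "W1q_dist_powr q \<Lambda> f g v = (\<integral>\<^sup>+ x\<in>\<Lambda>. ennreal (\<bar>f x - v x\<bar> powr q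
      + (\<Sum>i\<in>Basis. \<bar>g i x - pderiv v i x\<bar> powr q)) \<partial>lebesgue)"

lemma W1qE_iff_W1q_dist_powr:
  "W1qE q \<Lambda> E f \<longleftrightarrow> (\<exists>g. W1q_grad q \<Lambda> f g \<and>
      (\<forall>\<epsilon>>0. \<exists>v. smooth v \<and> compact (csupp v) \<and> csupp v \<inter> E = {} \<and>
         W1q_dist_powr q \<Lambda> f g v < ennreal \<epsilon>))"
  unfolding W1qE_def W1q_dist_powr_def ..

(* The pointwise error of the Leibniz rule: n, d i, e, u i stand for \<eta> x, pderiv \<eta> i x,
  f x - v x and g i x - pderiv v i x. *)
lemma Leibniz_error_powr_le:
  fixes n e A q :: real and u d B :: "'i \<Rightarrow> real"
  assumes q: "0 \<le> q" and n: "\<bar>n\<bar> \<le> A" and d: "\<And>i. i \<in> I \<Longrightarrow> \<bar>d i\<bar> \<le> B i"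
  shows "\<bar>n * e\<bar> powr q + (\<Sum>i\<in>I. \<bar>n * u i + d i * e\<bar> powr q)
    \<le> 2 powr q * (A powr q + (\<Sum>i\<in>I. B i powr q)) * (\<bar>e\<bar> powr q + (\<Sum>i\<in>I. \<bar>u i\<bar> powr q))"
proof -
  define P where "P = \<bar>e\<bar> powr q"
  define Q where "Q = (\<Sum>i\<in>I. \<bar>u i\<bar> powr q)"
  define b where "b = (\<Sum>i\<in>I. B i powr q)"
  have "1 \<le> (2::real) powr q"
    using q by (simp add: ge_one_powr_ge_zero)
  have "\<bar>n * e\<bar> powr q \<le> A powr q * P"
    unfolding P_def by (rule abs_mult_powr_le[OF q n])
  also have "\<dots> \<le> 2 powr q * A powr q * P"
    using mult_right_mono[OF \<open>1 \<le> 2 powr q\<close>, of "A powr q * P"] by (simp add: P_def mult.assoc)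
  finally have first: "\<bar>n * e\<bar> powr q \<le> 2 powr q * A powr q * P" .
  have "\<bar>n * u i + d i * e\<bar> powr q \<le> 2 powr q * (A powr q * \<bar>u i\<bar> powr q + B i powr q * P)"
    if "i \<in> I" for i
  proof -
    have "\<bar>n * u i + d i * e\<bar> powr q \<le> 2 powr q * (\<bar>n * u i\<bar> powr q + \<bar>d i * e\<bar> powr q)"
      by (rule abs_add_powr_le[OF q])
    also have "\<dots> \<le> 2 powr q * (A powr q * \<bar>u i\<bar> powr q + B i powr q * P)"
      unfolding P_def using q n d[OF that]
      by (intro mult_left_mono add_mono abs_mult_powr_le) auto
    finally show ?thesis .
  qed
  then have "(\<Sum>i\<in>I. \<bar>n * u i + d i * e\<bar> powr q)
      \<le> (\<Sum>i\<in>I. 2 powr q * (A powr q * \<bar>u i\<bar> powr q + B i powr q * P))"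
    by (rule sum_mono)
  also have "\<dots> = 2 powr q * (A powr q * Q + b * P)"
    by (simp add: Q_def b_def sum.distrib flip: sum_distrib_left sum_distrib_right)
  finally have second: "(\<Sum>i\<in>I. \<bar>n * u i + d i * e\<bar> powr q) \<le> 2 powr q * (A powr q * Q + b * P)" .
  have "0 \<le> 2 powr q * b * Q"
    unfolding b_def Q_def by (simp add: sum_nonneg)
  moreover have "2 powr q * (A powr q + b) * (P + Q)
      = 2 powr q * A powr q * P + 2 powr q * (A powr q * Q + b * P) + 2 powr q * b * Q"
    by (simp add: algebra_simps)
  ultimately show ?thesis
    using first second unfolding P_def[symmetric] Q_def[symmetric] b_def[symmetric] by linarith
qed

lemma borel_measurable_W1q_integrand:
  fixes S :: "'a::euclidean_space set"
  assumes S: "S \<in> sets lebesgue" and f: "set_borel_measurable lebesgue S f"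
    and g: "\<And>i. i \<in> Basis \<Longrightarrow> set_borel_measurable lebesgue S (g i)" and v: "smooth v"
  shows "(\<lambda>x. ennreal (\<bar>f x - v x\<bar> powr q + (\<Sum>i\<in>Basis. \<bar>g i x - pderiv v i x\<bar> powr q)))
    \<in> borel_measurable (lebesgue_on S)"
proof -
  have meas_v: "v \<in> borel_measurable (lebesgue_on S)"
    using borel_measurable_lebesgue_on_smooth[OF v S] .
  have "(\<lambda>x. \<Sum>i\<in>Basis. \<bar>g i x - pderiv v i x\<bar> powr q) \<in> borel_measurable (lebesgue_on S)"
  proof (rule borel_measurable_sum)
    fix i :: 'a assume i: "i \<in> Basis"
    have [measurable]: "g i \<in> borel_measurable (lebesgue_on S)"
      using g[OF i] S by (simp add: set_borel_measurable_iff_lebesgue_on)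
    have [measurable]: "pderiv v i \<in> borel_measurable (lebesgue_on S)"
      using borel_measurable_lebesgue_on_smooth[OF smooth_pderiv[OF v i] S] .
    show "(\<lambda>x. \<bar>g i x - pderiv v i x\<bar> powr q) \<in> borel_measurable (lebesgue_on S)"
      by measurable
  qed
  moreover have "f \<in> borel_measurable (lebesgue_on S)"
    using f S by (simp add: set_borel_measurable_iff_lebesgue_on)
  ultimately show ?thesis
    using meas_v by measurable
qed

lemma W1q_dist_powr_mult_le:
  fixes S T :: "'a::euclidean_space set"
  assumes q: "0 \<le> q" and "T \<subseteq> S" "S \<in> sets lebesgue"
    and f: "set_borel_measurable lebesgue S f"
    and g: "\<And>i. i \<in> Basis \<Longrightarrow> set_borel_measurable lebesgue S (g i)"
    and \<eta>: "smooth \<eta>" and v: "smooth v"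
    and A: "\<And>x. \<bar>\<eta> x\<bar> \<le> A" and B: "\<And>i x. i \<in> Basis \<Longrightarrow> \<bar>pderiv \<eta> i x\<bar> \<le> B i"
  shows "W1q_dist_powr q T (\<lambda>x. \<eta> x * f x) (\<lambda>i x. \<eta> x * g i x + pderiv \<eta> i x * f x)
      (\<lambda>x. v x * \<eta> x)
    \<le> ennreal (2 powr q * (A powr q + (\<Sum>i\<in>Basis. B i powr q))) * W1q_dist_powr q S f g v"
proof -
  define K where "K = 2 powr q * (A powr q + (\<Sum>i\<in>Basis. B i powr q))"
  define E where "E x = \<bar>f x - v x\<bar> powr q + (\<Sum>i\<in>Basis. \<bar>g i x - pderiv v i x\<bar> powr q)" for x
  have K: "0 \<le> K"
    unfolding K_def by (simp add: sum_nonneg)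
  have pointwise: "\<bar>\<eta> x * f x - v x * \<eta> x\<bar> powr q + (\<Sum>i\<in>Basis.
      \<bar>\<eta> x * g i x + pderiv \<eta> i x * f x - pderiv (\<lambda>x. v x * \<eta> x) i x\<bar> powr q) \<le> K * E x" for x
  proof -
    have "pderiv (\<lambda>x. v x * \<eta> x) i x = pderiv v i x * \<eta> x + v x * pderiv \<eta> i x" for i
      by (rule pderiv_mult[OF smooth_differentiable[OF v] smooth_differentiable[OF \<eta>]])
    then have "\<eta> x * g i x + pderiv \<eta> i x * f x - pderiv (\<lambda>x. v x * \<eta> x) i x
        = \<eta> x * (g i x - pderiv v i x) + pderiv \<eta> i x * (f x - v x)" for i
      by (simp add: algebra_simps)
    moreover have "\<eta> x * f x - v x * \<eta> x = \<eta> x * (f x - v x)"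
      by (simp add: algebra_simps)
    ultimately show ?thesis
      unfolding K_def E_def using Leibniz_error_powr_le[OF q A B] by simp
  qed
  have meas_E: "(\<lambda>x. ennreal (E x)) \<in> borel_measurable (lebesgue_on S)"
    unfolding E_def using borel_measurable_W1q_integrand[OF assms(3) f g v] .
  have "W1q_dist_powr q T (\<lambda>x. \<eta> x * f x) (\<lambda>i x. \<eta> x * g i x + pderiv \<eta> i x * f x)
      (\<lambda>x. v x * \<eta> x) \<le> (\<integral>\<^sup>+ x\<in>S. ennreal K * ennreal (E x) \<partial>lebesgue)"
    unfolding W1q_dist_powr_def using \<open>T \<subseteq> S\<close> pointwise K
    by (intro nn_integral_mono) (auto split: split_indicator simp flip: ennreal_mult' intro: ennreal_leI)
  also have "\<dots> = ennreal K * W1q_dist_powr q S f g v"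
    using meas_E assms(3)
    by (simp add: W1q_dist_powr_def E_def nn_integral_cmult flip: nn_integral_restrict_space)
  finally show ?thesis
    unfolding K_def .
qed

lemma frontier_component_disjoint:
  fixes S :: "'a::real_normed_vector set"
  assumes "open S" "C \<in> components S"
  shows "frontier C \<inter> S = {}"
  using frontier_of_components_subset[OF assms(2)] assms(1)
  by (auto simp: frontier_def interior_open)

lemma Cinf_c_pderiv_bounded:
  assumes "\<eta> \<in> Cinf_c \<Lambda>"
  shows "\<exists>B. \<forall>i\<in>Basis. \<forall>x. \<bar>pderiv \<eta> i x\<bar> \<le> B i"
  using Cinf_c_bounded[OF Cinf_c_pderiv[OF assms]] by (intro bchoice) blast

lemma csupp_mult_inter_frontier_component:
  fixes \<Omega> D U C :: "'a::euclidean_space set"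
  assumes "open \<Omega>" "open U" "U \<subseteq> \<Omega> \<union> D" "csupp v \<inter> D = {}" "\<eta> \<in> Cinf_c U"
    and "C \<in> components (\<Omega> \<inter> U)"
  shows "csupp (\<lambda>x. v x * \<eta> x) \<inter> frontier C = {}"
proof -
  have "csupp (\<lambda>x. v x * \<eta> x) \<subseteq> \<Omega> \<inter> U"
    using csupp_mult_subset[of v \<eta>] assms(3-5) unfolding Cinf_c_def by blast
  then show ?thesis
    using frontier_component_disjoint[OF open_Int[OF assms(1,2)] assms(6)] by blast
qed

lemma ennreal_mult_less_of_less_divide:
  assumes "0 \<le> K" "0 < \<epsilon>" "x < ennreal (\<epsilon> / (K + 1))"
  shows "ennreal K * x < ennreal \<epsilon>"
proof -
  have "ennreal K * x \<le> ennreal K * ennreal (\<epsilon> / (K + 1))"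
    using assms(3) by (intro mult_left_mono) auto
  also have "\<dots> = ennreal (K * (\<epsilon> / (K + 1)))"
    by (rule ennreal_mult'[OF assms(1), symmetric])
  also have "\<dots> < ennreal \<epsilon>"
    using assms(1,2) by (intro ennreal_lessI) (auto simp: field_simps)
  finally show ?thesis .
qed

lemma W1q0_component_mult_Cinf_c:
  fixes \<Omega> D U C :: "'a::euclidean_space set"
  assumes \<Omega>: "open \<Omega>" "emeasure lebesgue \<Omega> < \<infinity>" and U: "open U" "U \<subseteq> \<Omega> \<union> D"
    and q: "1 \<le> q" and f: "W1qE q \<Omega> D f" and \<eta>: "\<eta> \<in> Cinf_c U"
    and C: "C \<in> components (\<Omega> \<inter> U)"
  shows "W1q0 q C (\<lambda>x. \<eta> x * f x)"
proof -
  obtain g where grad: "W1q_grad q \<Omega> f g" and approx: "\<And>\<epsilon>. \<epsilon> > 0 \<Longrightarrow> \<exists>v. smooth v \<and>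
      compact (csupp v) \<and> csupp v \<inter> D = {} \<and> W1q_dist_powr q \<Omega> f g v < ennreal \<epsilon>"
    using f unfolding W1qE_iff_W1q_dist_powr by blast
  have "C \<subseteq> \<Omega>" "open C"
    using in_components_subset[OF C] open_components[OF open_Int[OF \<Omega>(1) U(1)] C] by auto
  obtain A where A: "\<And>x. \<bar>\<eta> x\<bar> \<le> A"
    using Cinf_c_bounded[OF \<eta>] by blast
  obtain B where B: "\<And>i x. i \<in> Basis \<Longrightarrow> \<bar>pderiv \<eta> i x\<bar> \<le> B i"
    using Cinf_c_pderiv_bounded[OF \<eta>] by blast
  define K where "K = 2 powr q * (A powr q + (\<Sum>i\<in>Basis. B i powr q))"
  have K: "0 \<le> K"
    unfolding K_def by (simp add: sum_nonneg)
  have "\<exists>w. w \<in> Cinf_c U \<and> csupp w \<inter> frontier C = {} \<and>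
      W1q_dist_powr q C (\<lambda>x. \<eta> x * f x) (\<lambda>i x. \<eta> x * g i x + pderiv \<eta> i x * f x) w < ennreal \<epsilon>"
    if "\<epsilon> > 0" for \<epsilon>
  proof -
    obtain v where v: "smooth v" "csupp v \<inter> D = {}"
      and v_close: "W1q_dist_powr q \<Omega> f g v < ennreal (\<epsilon> / (K + 1))"
      using approx[of "\<epsilon> / (K + 1)"] \<open>\<epsilon> > 0\<close> K by auto
    have "W1q_dist_powr q C (\<lambda>x. \<eta> x * f x) (\<lambda>i x. \<eta> x * g i x + pderiv \<eta> i x * f x)
        (\<lambda>x. v x * \<eta> x) \<le> ennreal K * W1q_dist_powr q \<Omega> f g v"
      using grad q \<eta> A B v(1) \<open>C \<subseteq> \<Omega>\<close> open_sets_lebesgue[OF \<Omega>(1)]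
      unfolding K_def W1q_grad_def Lq_def Cinf_c_def
      by (intro W1q_dist_powr_mult_le) auto
    also have "\<dots> < ennreal \<epsilon>"
      using ennreal_mult_less_of_less_divide[OF K \<open>\<epsilon> > 0\<close> v_close] .
    finally show ?thesis
      using Cinf_c_mult[OF v(1) \<eta>] csupp_mult_inter_frontier_component[OF \<Omega>(1) U v(2) \<eta> C]
      by blast
  qed
  then show ?thesis
    unfolding W1q0_def W1qE_iff_W1q_dist_powr Cinf_c_def
    using W1q_grad_mult_Cinf_c[OF grad q open_sets_lebesgue[OF \<Omega>(1)] \<Omega>(2) \<open>C \<subseteq> \<Omega>\<close>
        open_sets_lebesgue[OF \<open>open C\<close>] \<eta>]
    by blast
qed

theorem corollary3p9:
  fixes \<Omega> D U :: "(real^3) set" and q :: real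
    and f \<eta> :: "real^3 \<Rightarrow> real"
  assumes "open \<Omega>" "connected \<Omega>" "bounded \<Omega>"
    and "closed D" "D \<subseteq> frontier \<Omega>"
    and "open U" "U \<subseteq> \<Omega> \<union> D"
    and "finite (components (\<Omega> \<inter> U))"
    and "1 \<le> q"
    and "W1qE q \<Omega> D f"
    and "\<eta> \<in> Cinf_c U"
  shows "\<forall>\<Omega>j \<in> components (\<Omega> \<inter> U). W1q0 q \<Omega>j (\<lambda>x. \<eta> x * f x)"
proof -
  have "emeasure lebesgue \<Omega> < \<infinity>"
    using fmeasurableD2[OF lmeasurable_open[OF assms(3,1)]] by (simp add: top.not_eq_extremum)
  then show ?thesis
    using W1q0_component_mult_Cinf_c[OF assms(1) _ assms(6,7,9,10,11)] by blast
qed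

end
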